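(* Let $M\ge2$ and consider a hierarchical system as described in the context, with $L=\sum_{l=1}^ML^{(l)}$. Let $x^{(1)}:[0,\infty)\to\mathbb{R}^{N^{(1)}}$ be the solution of $\dot x^{(1)}=-Lx^{(1)}$, $x^{(1)}(0)=x^{(1)}_0$. Then \[ \lim_{t\to\infty}x^{(1)}(t)=\frac{\mathbf{1}\mathbf{1}^TK}{\mathbf{1}^TK\mathbf{1}}\,x^{(1)}_0,\qquad K=\mathrm{diag}(a_1,\dots,a_{N^{(1)}}), \] where $\mathbf 1$ is the all-ones vector in $\mathbb{R}^{N^{(1)}}$. In particular, if $a_i=a_j$ for all $i,j$, all components of $x^{(1)}(t)$ converge to the average of the components of $x^{(1)}_0$.
   Context: Hierarchical structure. Fix an integer $M\ge 2$ and positive integers $N^{(1)},\dots,N^{(M)}$; set $N^{(M+1)}:=1$. For each $l\in\{1,\dots,M\}$ the $N^{(l)}$ nodes of layer $l$ are partitioned into $N^{(l+1)}$ groups $G^{(l)}_1,\dots,G^{(l)}_{N^{(l+1)}}$ of sizes $k^{(l)}_p\ge1$ (so $\sum_pk^{(l)}_p=N^{(l)}$), numbered consecutively: group $G^{(l)}_p$ consists of nodes $\sum_{m<p}k^{(l)}_m+1,\dots,\sum_{m\le p}k^{(l)}_m$ of layer $l$. Each group $G^{(l)}_p$ carries a connected undirected graph with binary adjacency matrix; $L^{(l)}_p$ is its Laplacian (degree matrix minus adjacency matrix), and $L^{(l)}_D=\mathrm{diag}(L^{(l)}_1,\dots,L^{(l)}_{N^{(l+1)}})$ (block diagonal). Weights: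 positive constants $a_1,\dots,a_{N^{(1)}}$; $a^{(1)}_i=a_i$, $a^{(l+1)}_p=\sum_{i\in G^{(l)}_p}a^{(l)}_i$; $K^{(l)}=\mathrm{diag}(a^{(l)}_1,\dots,a^{(l)}_{N^{(l)}})^{-1}$. For $l=1,\dots,M-1$: $B^{(l)}=\mathrm{diag}(\mathbf{1}_{k^{(l)}_1},\dots,\mathbf{1}_{k^{(l)}_{N^{(l+1)}}})\in\mathbb{R}^{N^{(l)}\times N^{(l+1)}}$ ($\mathbf 1_k$ all-ones column vector), $C^{(l)}=\mathrm{diag}(C^{(l)}_1,\dots,C^{(l)}_{N^{(l+1)}})\in\mathbb{R}^{N^{(l+1)}\times N^{(l)}}$ with each $C^{(l)}_p\in\mathbb{R}^{1\times k^{(l)}_p}$ having nonnegative entries summing to $1$. $L^{(1)}=K^{(1)}L^{(1)}_D$ and $L^{(l)}=B^{(1)}\cdots B^{(l-1)}K^{(l)}L^{(l)}_DC^{(l-1)}\cdots C^{(1)}$ for $l=2,\dots,M$. (The equation $\dot x^{(1)}=-Lx^{(1)}$ is the hierarchical system without interlayer delays.) *)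

theory Defs
  imports "HOL-Analysis.Analysis"
begin

text \<open>Layers are numbered 1..M (layer index l :: nat). N l is the number
 of nodes of layer l, nodes are indexed 0..<N l, groups of layer l are indexed
 0..<N (Suc l) and k l p is the size of group p of layer l.
 Matrices are functions nat \<Rightarrow> nat \<Rightarrow> real with explicit dimensions.
 adj l i j is the (block diagonal) adjacency matrix of layer l (the graphs on the groups),
 c l i is the entry of C^(l) belonging to node i of layer l (row = group of i).\<close>

definition mmult :: "nat \<Rightarrow> (nat \<Rightarrow> nat \<Rightarrow> real) \<Rightarrow> (nat \<Rightarrow> nat \<Rightarrow> real) \<Rightarrow> nat \<Rightarrow> nat \<Rightarrow> real" where
  "mmult n A B i j = (\<Sum>m<n. A i m * B m j)"

definition idm :: "nat \<Rightarrow> nat \<Rightarrow> real" where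
  "idm i j = (if i = j then 1 else 0)"

definition off :: "(nat \<Rightarrow> nat \<Rightarrow> nat) \<Rightarrow> nat \<Rightarrow> nat \<Rightarrow> nat" where
  "off k l p = (\<Sum>m<p. k l m)"

definition ingrp :: "(nat \<Rightarrow> nat \<Rightarrow> nat) \<Rightarrow> nat \<Rightarrow> nat \<Rightarrow> nat \<Rightarrow> bool" where
  "ingrp k l p i \<longleftrightarrow> off k l p \<le> i \<and> i < off k l (Suc p)"

definition Bmat :: "(nat \<Rightarrow> nat \<Rightarrow> nat) \<Rightarrow> nat \<Rightarrow> nat \<Rightarrow> nat \<Rightarrow> real" where
  "Bmat k l i p = (if ingrp k l p i then 1 else 0)"

definition Cmat :: "(nat \<Rightarrow> nat \<Rightarrow> nat) \<Rightarrow> (nat \<Rightarrow> nat \<Rightarrow> real) \<Rightarrow> nat \<Rightarrow> nat \<Rightarrow> nat \<Rightarrow> real" where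
  "Cmat k c l p i = (if ingrp k l p i then c l i else 0)"

fun aw :: "(nat \<Rightarrow> nat \<Rightarrow> nat) \<Rightarrow> (nat \<Rightarrow> real) \<Rightarrow> nat \<Rightarrow> nat \<Rightarrow> real" where
  "aw k a 0 i = 0"
| "aw k a (Suc 0) i = a i"
| "aw k a (Suc (Suc l)) p = (\<Sum>i \<in> {off k (Suc l) p..<off k (Suc l) (Suc p)}. aw k a (Suc l) i)"

definition LD :: "(nat \<Rightarrow> nat) \<Rightarrow> (nat \<Rightarrow> nat \<Rightarrow> nat \<Rightarrow> real) \<Rightarrow> nat \<Rightarrow> nat \<Rightarrow> nat \<Rightarrow> real" where
  "LD N adj l i j = (if i = j then (\<Sum>m<N l. adj l i m) else 0) - adj l i j"

definition KLD :: "(nat \<Rightarrow> nat) \<Rightarrow> (nat \<Rightarrow> nat \<Rightarrow> nat) \<Rightarrow> (nat \<Rightarrow> nat \<Rightarrow> nat \<Rightarrow> real) \<Rightarrow> (nat \<Rightarrow> real)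
    \<Rightarrow> nat \<Rightarrow> nat \<Rightarrow> nat \<Rightarrow> real" where
  "KLD N k adj a l i j = LD N adj l i j / aw k a l i"

text \<open>Bprod l = B^(1) ... B^(l-1) (N^(1) x N^(l)); Cprod l = C^(l-1) ... C^(1) (N^(l) x N^(1)).\<close>
fun Bprod :: "(nat \<Rightarrow> nat) \<Rightarrow> (nat \<Rightarrow> nat \<Rightarrow> nat) \<Rightarrow> nat \<Rightarrow> nat \<Rightarrow> nat \<Rightarrow> real" where
  "Bprod N k 0 = idm"
| "Bprod N k (Suc 0) = idm"
| "Bprod N k (Suc (Suc l)) = mmult (N (Suc l)) (Bprod N k (Suc l)) (Bmat k (Suc l))"

fun Cprod :: "(nat \<Rightarrow> nat) \<Rightarrow> (nat \<Rightarrow> nat \<Rightarrow> nat) \<Rightarrow> (nat \<Rightarrow> nat \<Rightarrow> real) \<Rightarrow> nat \<Rightarrow> nat \<Rightarrow> nat \<Rightarrow> real" where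
  "Cprod N k c 0 = idm"
| "Cprod N k c (Suc 0) = idm"
| "Cprod N k c (Suc (Suc l)) = mmult (N (Suc l)) (Cmat k c (Suc l)) (Cprod N k c (Suc l))"

definition Llayer :: "(nat \<Rightarrow> nat) \<Rightarrow> (nat \<Rightarrow> nat \<Rightarrow> nat) \<Rightarrow> (nat \<Rightarrow> nat \<Rightarrow> nat \<Rightarrow> real) \<Rightarrow> (nat \<Rightarrow> nat \<Rightarrow> real)
    \<Rightarrow> (nat \<Rightarrow> real) \<Rightarrow> nat \<Rightarrow> nat \<Rightarrow> nat \<Rightarrow> real" where
  "Llayer N k adj c a l =
     mmult (N l) (mmult (N l) (Bprod N k l) (KLD N k adj a l)) (Cprod N k c l)"

definition Ltot :: "nat \<Rightarrow> (nat \<Rightarrow> nat) \<Rightarrow> (nat \<Rightarrow> nat \<Rightarrow> nat) \<Rightarrow> (nat \<Rightarrow> nat \<Rightarrow> nat \<Rightarrow> real) \<Rightarrow> (nat \<Rightarrow> nat \<Rightarrow> real)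
    \<Rightarrow> (nat \<Rightarrow> real) \<Rightarrow> nat \<Rightarrow> nat \<Rightarrow> real" where
  "Ltot M N k adj c a i j = (\<Sum>l\<in>{1..M}. Llayer N k adj c a l i j)"

definition hier_system :: "nat \<Rightarrow> (nat \<Rightarrow> nat) \<Rightarrow> (nat \<Rightarrow> nat \<Rightarrow> nat) \<Rightarrow> (nat \<Rightarrow> nat \<Rightarrow> nat \<Rightarrow> real)
    \<Rightarrow> (nat \<Rightarrow> nat \<Rightarrow> real) \<Rightarrow> (nat \<Rightarrow> real) \<Rightarrow> bool" where
  "hier_system M N k adj c a \<longleftrightarrow>
     2 \<le> M \<and> N (Suc M) = 1 \<and>
     (\<forall>l\<in>{1..M}. 0 < N l) \<and>
     (\<forall>l\<in>{1..M}. (\<forall>p<N (Suc l). 1 \<le> k l p) \<and> (\<Sum>p<N (Suc l). k l p) = N l) \<and>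
     (\<forall>l\<in>{1..M}. \<forall>i j. (adj l i j = 0 \<or> adj l i j = 1) \<and> adj l i j = adj l j i \<and> adj l i i = 0 \<and>
        (adj l i j \<noteq> 0 \<longrightarrow> (\<exists>p<N (Suc l). ingrp k l p i \<and> ingrp k l p j))) \<and>
     (\<forall>l\<in>{1..M}. \<forall>p<N (Suc l). \<forall>i j. ingrp k l p i \<and> ingrp k l p j \<longrightarrow>
        (\<lambda>u v. adj l u v = 1)\<^sup>*\<^sup>* i j) \<and>
     (\<forall>l\<in>{1..M-1}. (\<forall>i<N l. 0 \<le> c l i) \<and>
        (\<forall>p<N (Suc l). (\<Sum>i\<in>{off k l p..<off k l (Suc p)}. c l i) = 1)) \<and>
     (\<forall>i<N 1. 0 < a i)"

end

theory Submission
  imports Defs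
begin

(* For a node q of layer l let wavg x l q be the a-weighted average of x over the layer-1 nodes
   below q, and cavg x l q the C-weighted average (C^(l-1) ... C^(1) x)_q, which is what the
   layer-l coupling acts on. That coupling is a Laplacian on the groups of layer l, so it leaves
   every wavg above layer l unchanged: the top average is conserved, and the deviation
   d_l = wavg_l - wavg_(l+1)(parent) is moved by the layer-l coupling alone. With E_l the
   Dirichlet energy of the layer-l graphs, the Lyapunov function V_l = sum_q a^(l)_q d_l(q)^2
   satisfies V_l' <= E_l(cavg_l - wavg_l) - E_l(d_l), and a Poincare inequality on the connected
   groups gives V_l <= C E_l(d_l). The mismatch cavg_l - wavg_l vanishes on layer 1, and on
   layer l+1 it is a C-average of layer-l mismatches and deviations; so by induction over the
   layers all d_l tend to 0, and telescoping along the ancestors, x tends to the conserved top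
   average. *)

lemma sum_sym_mult_diff:
  fixes w :: "'a \<Rightarrow> 'a \<Rightarrow> real"
  assumes sym: "\<And>r s. r \<in> A \<Longrightarrow> s \<in> A \<Longrightarrow> w r s = w s r"
  shows "(\<Sum>r\<in>A. \<Sum>s\<in>A. w r s * u r * (v r - v s))
       = (\<Sum>r\<in>A. \<Sum>s\<in>A. w r s * (u r - u s) * (v r - v s)) / 2"
proof -
  let ?T = "\<Sum>r\<in>A. \<Sum>s\<in>A. w r s * u r * (v r - v s)"
  have "?T = (\<Sum>s\<in>A. \<Sum>r\<in>A. w r s * u r * (v r - v s))"
    by (rule sum.swap)
  also have "\<dots> = (\<Sum>r\<in>A. \<Sum>s\<in>A. - (w r s * u s * (v r - v s)))"
    by (intro sum.cong refl) (simp add: sym algebra_simps)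
  finally have "?T + ?T = ?T + (\<Sum>r\<in>A. \<Sum>s\<in>A. - (w r s * u s * (v r - v s)))"
    by simp
  also have "\<dots> = (\<Sum>r\<in>A. \<Sum>s\<in>A. w r s * (u r - u s) * (v r - v s))"
    by (simp add: sum.distrib[symmetric] algebra_simps)
  finally show ?thesis by simp
qed

lemma sum_sym_diff_eq_0:
  fixes w :: "'a \<Rightarrow> 'a \<Rightarrow> real"
  assumes "\<And>r s. r \<in> A \<Longrightarrow> s \<in> A \<Longrightarrow> w r s = w s r"
  shows "(\<Sum>r\<in>A. \<Sum>s\<in>A. w r s * (v r - v s)) = 0"
  using sum_sym_mult_diff[of A w "\<lambda>_. 1" v] assms by simp

lemma minus_mult_diff_le:
  fixes w d d' e e' :: real
  assumes "0 \<le> w"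
  shows "- (w * (d - d') * ((d + e) - (d' + e'))) \<le> w * (((e - e')\<^sup>2 - (d - d')\<^sup>2) / 2)"
proof -
  have "0 \<le> w * ((d - d') + (e - e'))\<^sup>2" using assms by simp
  moreover have "w * (((e - e')\<^sup>2 - (d - d')\<^sup>2) / 2) - - (w * (d - d') * ((d + e) - (d' + e')))
      = w * ((d - d') + (e - e'))\<^sup>2 / 2"
    by (simp add: power2_eq_square field_simps)
  ultimately show ?thesis by linarith
qed

lemma sq_diff_le_sq_diff_add: "((x::real) - z)\<^sup>2 \<le> 2 * (x - y)\<^sup>2 + 2 * (y - z)\<^sup>2"
proof -
  have "0 \<le> ((x - y) - (y - z))\<^sup>2" by simp
  then show ?thesis by (simp add: power2_eq_square algebra_simps)
qed

lemma finite_uniform_bound: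
  fixes F :: "'a \<Rightarrow> 'b \<Rightarrow> real"
  assumes "finite S" and bound: "\<And>x. x \<in> S \<Longrightarrow> \<exists>C\<ge>0. \<forall>u. F x u \<le> C * G u"
    and G: "\<And>u. 0 \<le> G u"
  shows "\<exists>C\<ge>0. \<forall>x\<in>S. \<forall>u. F x u \<le> C * G u"
proof -
  obtain C where C: "\<And>x. x \<in> S \<Longrightarrow> 0 \<le> C x \<and> (\<forall>u. F x u \<le> C x * G u)"
    using bchoice[of S "\<lambda>x C. 0 \<le> C \<and> (\<forall>u. F x u \<le> C * G u)"] bound by blast
  have "F x u \<le> (\<Sum>y\<in>S. C y) * G u" if "x \<in> S" for x u
  proof -
    have "F x u \<le> C x * G u" using C that by blast
    also have "\<dots> \<le> (\<Sum>y\<in>S. C y) * G u"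
      using C that \<open>finite S\<close> G by (intro mult_right_mono member_le_sum) auto
    finally show ?thesis .
  qed
  moreover have "0 \<le> (\<Sum>y\<in>S. C y)" using C by (intro sum_nonneg) blast
  ultimately show ?thesis by blast
qed

lemma abs_le_if_weighted_mean_eq_0:
  fixes w u :: "'a \<Rightarrow> real"
  assumes w: "\<And>r. r \<in> G \<Longrightarrow> 0 \<le> w r" and W: "0 < (\<Sum>r\<in>G. w r)"
    and mean: "(\<Sum>r\<in>G. w r * u r) = 0"
    and B: "\<And>r. r \<in> G \<Longrightarrow> \<bar>u q - u r\<bar> \<le> B"
  shows "\<bar>u q\<bar> \<le> B"
proof -
  have "u q * (\<Sum>r\<in>G. w r) = (\<Sum>r\<in>G. w r * (u q - u r))"
    using mean by (simp add: sum_distrib_left right_diff_distrib sum_subtractf algebra_simps)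
  moreover have "\<bar>u q\<bar> * (\<Sum>r\<in>G. w r) = \<bar>u q * (\<Sum>r\<in>G. w r)\<bar>"
    using W by (simp add: abs_mult)
  ultimately have "\<bar>u q\<bar> * (\<Sum>r\<in>G. w r) = \<bar>\<Sum>r\<in>G. w r * (u q - u r)\<bar>"
    by simp
  also have "\<dots> \<le> (\<Sum>r\<in>G. \<bar>w r * (u q - u r)\<bar>)"
    by (rule sum_abs)
  also have "\<dots> \<le> (\<Sum>r\<in>G. w r * B)"
    using w B by (intro sum_mono) (simp add: abs_mult mult_left_mono)
  also have "\<dots> = B * (\<Sum>r\<in>G. w r)"
    by (simp add: sum_distrib_left mult.commute)
  finally show ?thesis using W by simp
qed

lemma weighted_mean_const_weights:
  fixes a x :: "'a \<Rightarrow> real"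
  assumes const: "\<And>i j. i \<in> A \<Longrightarrow> j \<in> A \<Longrightarrow> a i = a j" and nz: "\<And>i. i \<in> A \<Longrightarrow> a i \<noteq> 0"
  shows "(\<Sum>j\<in>A. a j * x j) / (\<Sum>j\<in>A. a j) = (\<Sum>j\<in>A. x j) / card A"
proof (cases "A = {}")
  case False
  then obtain i where i: "i \<in> A" by blast
  have ai: "a j = a i" if "j \<in> A" for j
    using const i that by blast
  have "(\<Sum>j\<in>A. a j * x j) = a i * (\<Sum>j\<in>A. x j)"
    unfolding sum_distrib_left by (intro sum.cong refl) (metis ai)
  moreover have "(\<Sum>j\<in>A. a j) = card A * a i"
    using sum.cong[OF refl ai, of A id] by simp
  ultimately show ?thesis using nz i by simp
qed simp

lemma exp_decay_tendsto_zero: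
  assumes "(0::real) < \<kappa>"
  shows "((\<lambda>t. exp (- \<kappa> * (t - T)) * B) \<longlongrightarrow> 0) at_top"
proof -
  have "filterlim (\<lambda>t. t - T) at_top at_top"
    by (rule filterlim_tendsto_add_at_top[OF tendsto_const filterlim_ident, of "- T", simplified])
  then have "filterlim (\<lambda>t. - \<kappa> * (t - T)) at_bot at_top"
    using assms by (intro filterlim_tendsto_neg_mult_at_bot[OF tendsto_const]) auto
  then have "((\<lambda>t. exp (- \<kappa> * (t - T))) \<longlongrightarrow> 0) at_top"
    by (rule filterlim_compose[OF exp_at_bot])
  then show ?thesis by (rule tendsto_mult_left_zero)
qed

lemma linear_differential_inequality:
  fixes V V' :: "real \<Rightarrow> real"
  assumes der: "\<And>s. T \<le> s \<Longrightarrow> (V has_real_derivative V' s) (at s)"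
    and ineq: "\<And>s. T \<le> s \<Longrightarrow> V' s \<le> - \<kappa> * (V s - \<beta>)"
    and "T \<le> t"
  shows "V t - \<beta> \<le> exp (- \<kappa> * (t - T)) * (V T - \<beta>)"
proof -
  define \<phi> where "\<phi> s = exp (\<kappa> * s) * (V s - \<beta>)" for s
  have "\<phi> t \<le> \<phi> T"
  proof (rule DERIV_nonpos_imp_nonincreasing[OF \<open>T \<le> t\<close>])
    fix s assume s: "T \<le> s" "s \<le> t"
    have "(\<phi> has_real_derivative exp (\<kappa> * s) * (\<kappa> * (V s - \<beta>) + V' s)) (at s)"
      unfolding \<phi>_def using der[OF s(1)] by (auto intro!: derivative_eq_intros simp: algebra_simps)
    moreover have "exp (\<kappa> * s) * (\<kappa> * (V s - \<beta>) + V' s) \<le> 0"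
      using ineq[OF s(1)] by (intro mult_nonneg_nonpos) auto
    ultimately show "\<exists>y. (\<phi> has_real_derivative y) (at s) \<and> y \<le> 0" by blast
  qed
  have "V t - \<beta> = exp (- \<kappa> * t) * \<phi> t"
    by (simp add: \<phi>_def mult.assoc[symmetric] exp_add[symmetric])
  also have "\<dots> \<le> exp (- \<kappa> * t) * \<phi> T"
    using \<open>\<phi> t \<le> \<phi> T\<close> by simp
  also have "\<dots> = exp (- \<kappa> * (t - T)) * (V T - \<beta>)"
    by (simp add: \<phi>_def mult.assoc[symmetric] exp_add[symmetric] right_diff_distrib)
  finally show ?thesis .
qed

lemma tendsto_zero_if_differential_inequality:
  fixes V V' h :: "real \<Rightarrow> real"
  assumes der: "\<And>t. 0 \<le> t \<Longrightarrow> (V has_real_derivative V' t) (at t within {0..})"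
    and ineq: "\<And>t. 0 \<le> t \<Longrightarrow> V' t \<le> - \<kappa> * V t + h t"
    and \<kappa>: "0 < \<kappa>" and h: "(h \<longlongrightarrow> 0) at_top" and nonneg: "\<And>t. 0 \<le> t \<Longrightarrow> 0 \<le> V t"
  shows "(V \<longlongrightarrow> 0) at_top"
proof (rule tendstoI)
  fix \<epsilon> :: real assume \<epsilon>: "0 < \<epsilon>"
  have "\<forall>\<^sub>F t in at_top. h t < \<kappa> * \<epsilon> / 2"
    using order_tendstoD(2)[OF h, of "\<kappa> * \<epsilon> / 2"] \<epsilon> \<kappa> by simp
  then obtain T where T: "1 \<le> T" and hT: "\<And>t. T \<le> t \<Longrightarrow> h t < \<kappa> * \<epsilon> / 2"
    unfolding eventually_at_top_linorder by (metis max.boundedE max.cobounded1)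
  have bound: "V t \<le> \<epsilon> / 2 + exp (- \<kappa> * (t - T)) * V T" if "T \<le> t" for t
  proof -
    have "V t - \<epsilon> / 2 \<le> exp (- \<kappa> * (t - T)) * (V T - \<epsilon> / 2)"
    proof (rule linear_differential_inequality[OF _ _ that])
      fix s assume s: "T \<le> s"
      have "at s within {0..} = at s"
        using s T by (intro at_within_interior) simp
      then show "(V has_real_derivative V' s) (at s)"
        using der[of s] s T by simp
      show "V' s \<le> - \<kappa> * (V s - \<epsilon> / 2)"
        using ineq[of s] hT[OF s] s T by (simp add: algebra_simps)
    qed
    also have "\<dots> \<le> exp (- \<kappa> * (t - T)) * V T"
      using \<epsilon> by (intro mult_left_mono) auto
    finally show ?thesis by simp
  qed
  have "\<forall>\<^sub>F t in at_top. exp (- \<kappa> * (t - T)) * V T < \<epsilon> / 2"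
    using order_tendstoD(2)[OF exp_decay_tendsto_zero[OF \<kappa>], of "\<epsilon> / 2"] \<epsilon> by simp
  moreover have "\<forall>\<^sub>F t in at_top. T \<le> t"
    by (rule eventually_ge_at_top)
  ultimately show "\<forall>\<^sub>F t in at_top. dist (V t) 0 < \<epsilon>"
  proof eventually_elim
    case (elim t)
    then show ?case using bound[of t] nonneg[of t] T by simp
  qed
qed

lemma tendsto_zero_if_sq_le:
  fixes f g :: "'a \<Rightarrow> real"
  assumes "\<And>t. (f t)\<^sup>2 \<le> g t" and "(g \<longlongrightarrow> 0) F"
  shows "(f \<longlongrightarrow> 0) F"
proof -
  have "((\<lambda>t. (f t)\<^sup>2) \<longlongrightarrow> 0) F"
  proof (rule tendsto_sandwich[where f = "\<lambda>_. 0" and h = g])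
    show "\<forall>\<^sub>F t in F. (f t)\<^sup>2 \<le> g t" using assms(1) by simp
  qed (simp_all add: assms(2))
  then have "((\<lambda>t. sqrt ((f t)\<^sup>2)) \<longlongrightarrow> sqrt 0) F"
    by (rule tendsto_real_sqrt)
  then show ?thesis by (simp add: tendsto_rabs_zero_iff)
qed

lemma off_mono: "p \<le> p' \<Longrightarrow> off k l p \<le> off k l p'"
  unfolding off_def by (rule sum_mono2) auto

lemma off_Suc: "off k l (Suc p) = off k l p + k l p"
  unfolding off_def by simp

lemma ingrp_unique:
  assumes "ingrp k l p q" "ingrp k l p' q"
  shows "p = p'"
proof -
  have "\<not> u < v" if "ingrp k l u q" "ingrp k l v q" for u v
    using that off_mono[of "Suc u" v k l] unfolding ingrp_def by auto
  then show ?thesis using assms by (meson linorder_neqE_nat)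
qed

lemma sum_groups: "(\<Sum>p<n. \<Sum>q\<in>{off k l p..<off k l (Suc p)}. g q) = (\<Sum>q<off k l n. g q)"
proof (induction n)
  case (Suc n)
  have "(\<Sum>q<off k l n. g q) + (\<Sum>q\<in>{off k l n..<off k l (Suc n)}. g q) = (\<Sum>q<off k l (Suc n). g q)"
    using sum.atLeastLessThan_concat[of 0 "off k l n" "off k l (Suc n)" g] off_mono[of n "Suc n" k l]
    by (simp add: lessThan_atLeast0)
  then show ?case using Suc by simp
qed (simp add: off_def)

locale hierarchy =
  fixes M :: nat and N :: "nat \<Rightarrow> nat" and k :: "nat \<Rightarrow> nat \<Rightarrow> nat"
    and adj :: "nat \<Rightarrow> nat \<Rightarrow> nat \<Rightarrow> real" and c :: "nat \<Rightarrow> nat \<Rightarrow> real" and a :: "nat \<Rightarrow> real"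
  assumes hier_system: "hier_system M N k adj c a"
begin

abbreviation members :: "nat \<Rightarrow> nat \<Rightarrow> nat set" where
  "members l p \<equiv> {off k l p..<off k l (Suc p)}"

lemma N_top: "N (Suc M) = 1"
  and N_pos: "1 \<le> l \<Longrightarrow> l \<le> M \<Longrightarrow> 0 < N l"
  and k_pos: "1 \<le> l \<Longrightarrow> l \<le> M \<Longrightarrow> p < N (Suc l) \<Longrightarrow> 1 \<le> k l p"
  and sum_k: "1 \<le> l \<Longrightarrow> l \<le> M \<Longrightarrow> (\<Sum>p<N (Suc l). k l p) = N l"
  and adj_01: "1 \<le> l \<Longrightarrow> l \<le> M \<Longrightarrow> adj l i j = 0 \<or> adj l i j = 1"
  and adj_sym: "1 \<le> l \<Longrightarrow> l \<le> M \<Longrightarrow> adj l i j = adj l j i"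
  and adj_within_group:
    "1 \<le> l \<Longrightarrow> l \<le> M \<Longrightarrow> adj l i j \<noteq> 0 \<Longrightarrow> \<exists>p<N (Suc l). ingrp k l p i \<and> ingrp k l p j"
  and group_connected: "1 \<le> l \<Longrightarrow> l \<le> M \<Longrightarrow> p < N (Suc l) \<Longrightarrow> ingrp k l p i \<Longrightarrow> ingrp k l p j \<Longrightarrow>
        (\<lambda>u v. adj l u v = 1)\<^sup>*\<^sup>* i j"
  and sum_c: "1 \<le> l \<Longrightarrow> l \<le> M - 1 \<Longrightarrow> p < N (Suc l) \<Longrightarrow> (\<Sum>i\<in>members l p. c l i) = 1"
  and a_pos: "i < N 1 \<Longrightarrow> 0 < a i"
  using hier_system unfolding hier_system_def by auto

lemma adj_nonneg: "1 \<le> l \<Longrightarrow> l \<le> M \<Longrightarrow> 0 \<le> adj l i j"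
  using adj_01[of l i j] by auto

lemma N_Suc_pos: "1 \<le> l \<Longrightarrow> l \<le> M \<Longrightarrow> 0 < N (Suc l)"
  using N_pos[of "Suc l"] N_top by (cases "l = M") auto

lemma off_N: "1 \<le> l \<Longrightarrow> l \<le> M \<Longrightarrow> off k l (N (Suc l)) = N l"
  using sum_k unfolding off_def by simp

lemma ingrp_less_N: "1 \<le> l \<Longrightarrow> l \<le> M \<Longrightarrow> p < N (Suc l) \<Longrightarrow> ingrp k l p q \<Longrightarrow> q < N l"
  using off_mono[of "Suc p" "N (Suc l)" k l] off_N unfolding ingrp_def by auto

lemma members_subset: "1 \<le> l \<Longrightarrow> l \<le> M \<Longrightarrow> p < N (Suc l) \<Longrightarrow> members l p \<subseteq> {..<N l}"
  using ingrp_less_N[of l p] by (auto simp: ingrp_def)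

lemma off_in_members: "1 \<le> l \<Longrightarrow> l \<le> M \<Longrightarrow> p < N (Suc l) \<Longrightarrow> off k l p \<in> members l p"
  using k_pos[of l p] by (simp add: off_Suc)

definition parent :: "nat \<Rightarrow> nat \<Rightarrow> nat" where
  "parent l q = (LEAST p. q < off k l (Suc p))"

lemma parent_eqI: "ingrp k l p q \<Longrightarrow> parent l q = p"
  unfolding parent_def
proof (rule Least_equality)
  show "q < off k l (Suc p)" if "ingrp k l p q" using that by (simp add: ingrp_def)
  show "p \<le> y" if "ingrp k l p q" "q < off k l (Suc y)" for y
  proof (rule ccontr)
    assume "\<not> p \<le> y"
    then have "off k l (Suc y) \<le> off k l p" by (intro off_mono) auto
    with that show False by (auto simp: ingrp_def)
  qed
qed

lemma parent_in_members:
  assumes "q \<in> members l p" shows "parent l q = p"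
  using assms by (intro parent_eqI) (simp add: ingrp_def)

lemma
  assumes "1 \<le> l" "l \<le> M" "q < N l"
  shows parent_less: "parent l q < N (Suc l)"
    and ingrp_parent: "ingrp k l (parent l q) q"
proof -
  let ?P = "\<lambda>p. q < off k l (Suc p)"
  have n: "0 < N (Suc l)" using N_Suc_pos assms by auto
  have P: "?P (N (Suc l) - 1)" using off_N assms n by simp
  then show "parent l q < N (Suc l)"
    unfolding parent_def using n by (meson Least_le diff_less le_less_trans zero_less_one)
  have "?P (parent l q)" unfolding parent_def using P by (rule LeastI)
  moreover have "off k l (parent l q) \<le> q"
  proof (cases "parent l q")
    case (Suc p)
    then have "\<not> ?P p" unfolding parent_def by (metis lessI not_less_Least)
    then show ?thesis using Suc by simp
  qed (simp add: off_def)
  ultimately show "ingrp k l (parent l q) q" by (simp add: ingrp_def)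
qed

lemma same_parent_if_adj:
  assumes "1 \<le> l" "l \<le> M" "adj l q s \<noteq> 0"
  shows "parent l q = parent l s"
  using adj_within_group[OF assms] parent_eqI by metis

lemma adj_eq_0_if_not_ingrp:
  assumes "1 \<le> l" "l \<le> M" "ingrp k l p r" "\<not> ingrp k l p s"
  shows "adj l r s = 0"
  using adj_within_group[of l r s] ingrp_unique assms by blast

fun ancestor :: "nat \<Rightarrow> nat \<Rightarrow> nat \<Rightarrow> nat" where
  "ancestor l 0 q = q"
| "ancestor l (Suc d) q = ancestor (Suc l) d (parent l q)"

lemma ancestor_Suc_parent: "ancestor l (Suc d) q = parent (l + d) (ancestor l d q)"
  by (induction d arbitrary: l q) auto

lemma ancestor_less: "1 \<le> l \<Longrightarrow> l + d \<le> Suc M \<Longrightarrow> q < N l \<Longrightarrow> ancestor l d q < N (l + d)"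
proof (induction d arbitrary: l q)
  case (Suc d)
  then show ?case using Suc.IH[of "Suc l" "parent l q"] parent_less[of l q] by simp
qed simp

lemma aw_Suc: "1 \<le> l \<Longrightarrow> aw k a (Suc l) p = (\<Sum>q\<in>members l p. aw k a l q)"
  by (cases l) auto

lemma aw_pos: "1 \<le> l \<Longrightarrow> l \<le> Suc M \<Longrightarrow> q < N l \<Longrightarrow> 0 < aw k a l q"
proof (induction l arbitrary: q rule: nat_induct_at_least)
  case base then show ?case using a_pos by simp
next
  case (Suc l)
  have "0 < (\<Sum>r\<in>members l q. aw k a l r)"
  proof (rule sum_pos2)
    show "off k l q \<in> members l q" using off_in_members Suc by auto
    have "r < N l" if "r \<in> members l q" for r
      using that members_subset[of l q] Suc by auto
    then show "0 < aw k a l (off k l q)" "\<And>r. r \<in> members l q \<Longrightarrow> 0 \<le> aw k a l r"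
      using Suc off_in_members[of l q] by (auto intro: less_imp_le)
  qed simp
  then show ?case using aw_Suc Suc by simp
qed

lemma aw_nonneg: "1 \<le> l \<Longrightarrow> l \<le> Suc M \<Longrightarrow> q < N l \<Longrightarrow> 0 \<le> aw k a l q"
  using aw_pos[of l q] by simp

fun wavg :: "(nat \<Rightarrow> real) \<Rightarrow> nat \<Rightarrow> nat \<Rightarrow> real" where
  "wavg f 0 q = 0"
| "wavg f (Suc 0) q = f q"
| "wavg f (Suc (Suc l)) p =
     (\<Sum>q\<in>members (Suc l) p. aw k a (Suc l) q * wavg f (Suc l) q) / aw k a (Suc (Suc l)) p"

fun cavg :: "(nat \<Rightarrow> real) \<Rightarrow> nat \<Rightarrow> nat \<Rightarrow> real" where
  "cavg f 0 q = 0"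
| "cavg f (Suc 0) q = f q"
| "cavg f (Suc (Suc l)) p = (\<Sum>q\<in>members (Suc l) p. c (Suc l) q * cavg f (Suc l) q)"

lemma wavg_Suc:
  "1 \<le> l \<Longrightarrow> wavg f (Suc l) p = (\<Sum>q\<in>members l p. aw k a l q * wavg f l q) / aw k a (Suc l) p"
  by (cases l) auto

lemma cavg_Suc: "1 \<le> l \<Longrightarrow> cavg f (Suc l) p = (\<Sum>q\<in>members l p. c l q * cavg f l q)"
  by (cases l) auto

lemma wavg_uminus: "wavg (\<lambda>i. - f i) l q = - wavg f l q"
  by (induction f l q rule: wavg.induct) (simp_all add: sum_negf)

lemma wavg_sum: "wavg (\<lambda>i. \<Sum>m\<in>S. F m i) l q = (\<Sum>m\<in>S. wavg (F m) l q)"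
proof (induction "\<lambda>i. \<Sum>m\<in>S. F m i" l q rule: wavg.induct)
  case (3 l p)
  then show ?case
    by (simp add: sum_distrib_left sum_divide_distrib[symmetric] sum.swap[of _ S])
qed simp_all

lemma wavg_cong:
  "1 \<le> l \<Longrightarrow> l \<le> Suc M \<Longrightarrow> q < N l \<Longrightarrow> (\<And>i. i < N 1 \<Longrightarrow> f i = g i) \<Longrightarrow> wavg f l q = wavg g l q"
proof (induction l arbitrary: q rule: nat_induct_at_least)
  case (Suc l)
  then have "wavg f l r = wavg g l r" if "r \<in> members l q" for r
    using that members_subset[of l q] by auto
  then show ?case using Suc by (simp add: wavg_Suc)
qed simp

lemma wavg_deriv:
  assumes "\<And>i. i < N 1 \<Longrightarrow> ((\<lambda>s. X s i) has_real_derivative X' i) (at t within S)"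
  shows "1 \<le> l \<Longrightarrow> l \<le> Suc M \<Longrightarrow> q < N l \<Longrightarrow>
    ((\<lambda>s. wavg (X s) l q) has_real_derivative wavg X' l q) (at t within S)"
proof (induction l arbitrary: q rule: nat_induct_at_least)
  case base then show ?case using assms by simp
next
  case (Suc l)
  then have "((\<lambda>s. wavg (X s) l r) has_real_derivative wavg X' l r) (at t within S)"
    if "r \<in> members l q" for r
    using that members_subset[of l q] by auto
  then have "((\<lambda>s. (\<Sum>r\<in>members l q. aw k a l r * wavg (X s) l r) / aw k a (Suc l) q)
     has_real_derivative (\<Sum>r\<in>members l q. aw k a l r * wavg X' l r) / aw k a (Suc l) q) (at t within S)"
    by (intro DERIV_cdivide DERIV_sum DERIV_cmult)
  then show ?case using Suc by (simp add: wavg_Suc)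
qed

lemma wavg_ancestor:
  "1 \<le> l \<Longrightarrow> l \<le> m \<Longrightarrow> m \<le> Suc M \<Longrightarrow> q < N l \<Longrightarrow>
    wavg (\<lambda>i. g (ancestor 1 (m - 1) i)) l q = g (ancestor l (m - l) q)"
proof (induction l arbitrary: q rule: nat_induct_at_least)
  case (Suc l)
  let ?f = "\<lambda>i. g (ancestor 1 (m - 1) i)" and ?v = "g (ancestor (Suc l) (m - Suc l) q)"
  have "wavg ?f l r = ?v" if r: "r \<in> members l q" for r
  proof -
    have "r < N l" using r members_subset[of l q] Suc by auto
    moreover have "m - l = Suc (m - Suc l)" using Suc by simp
    ultimately show ?thesis using Suc.IH[of r] Suc parent_in_members[OF r] by simp
  qed
  then have "wavg ?f (Suc l) q = (\<Sum>r\<in>members l q. aw k a l r) * ?v / aw k a (Suc l) q"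
    using Suc by (simp add: wavg_Suc sum_distrib_right)
  also have "\<dots> = ?v"
    using aw_Suc[of l q] aw_pos[of "Suc l" q] Suc by simp
  finally show ?case .
qed simp

lemma wavg_weighted_sum:
  "1 \<le> l \<Longrightarrow> l \<le> Suc M \<Longrightarrow> (\<Sum>q<N l. aw k a l q * wavg f l q) = (\<Sum>i<N 1. a i * f i)"
proof (induction l rule: nat_induct_at_least)
  case (Suc l)
  have "(\<Sum>p<N (Suc l). aw k a (Suc l) p * wavg f (Suc l) p)
      = (\<Sum>p<N (Suc l). \<Sum>q\<in>members l p. aw k a l q * wavg f l q)"
  proof (intro sum.cong refl)
    fix p assume "p \<in> {..<N (Suc l)}"
    then have "aw k a (Suc l) p \<noteq> 0" using aw_pos[of "Suc l" p] Suc by simp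
    then show "aw k a (Suc l) p * wavg f (Suc l) p = (\<Sum>q\<in>members l p. aw k a l q * wavg f l q)"
      using Suc by (simp add: wavg_Suc)
  qed
  also have "\<dots> = (\<Sum>q<off k l (N (Suc l)). aw k a l q * wavg f l q)"
    by (rule sum_groups)
  also have "\<dots> = (\<Sum>q<N l. aw k a l q * wavg f l q)"
    using off_N Suc by simp
  finally show ?case using Suc by simp
qed simp

lemma LD_mult:
  "q < N l \<Longrightarrow> (\<Sum>s<N l. LD N adj l q s * v s) = (\<Sum>s<N l. adj l q s * (v q - v s))"
  by (simp add: LD_def left_diff_distrib sum_subtractf if_distrib[where f="\<lambda>x. x * _"]
      sum_distrib_left sum_distrib_right right_diff_distrib cong: if_cong)

lemma sum_members_LD_mult:
  assumes "1 \<le> l" "l \<le> M" "p < N (Suc l)"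
  shows "(\<Sum>r\<in>members l p. \<Sum>s<N l. LD N adj l r s * v s) = 0"
proof -
  have sub: "members l p \<subseteq> {..<N l}" using members_subset assms by auto
  have "(\<Sum>s<N l. LD N adj l r s * v s) = (\<Sum>s\<in>members l p. adj l r s * (v r - v s))"
    if r: "r \<in> members l p" for r
  proof -
    have "(\<Sum>s<N l. LD N adj l r s * v s) = (\<Sum>s<N l. adj l r s * (v r - v s))"
      using r sub by (intro LD_mult) auto
    also have "\<dots> = (\<Sum>s\<in>members l p. adj l r s * (v r - v s))"
      using sub r adj_eq_0_if_not_ingrp[of l p r] assms
      by (intro sum.mono_neutral_right) (auto simp: ingrp_def)
    finally show ?thesis .
  qed
  then have "(\<Sum>r\<in>members l p. \<Sum>s<N l. LD N adj l r s * v s)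
      = (\<Sum>r\<in>members l p. \<Sum>s\<in>members l p. adj l r s * (v r - v s))"
    by simp
  also have "\<dots> = 0" using adj_sym assms by (intro sum_sym_diff_eq_0) auto
  finally show ?thesis .
qed

definition coupling :: "(nat \<Rightarrow> real) \<Rightarrow> nat \<Rightarrow> nat \<Rightarrow> real" where
  "coupling f l r = (\<Sum>s<N l. LD N adj l r s * cavg f l s) / aw k a l r"

lemma aw_mult_coupling:
  "1 \<le> l \<Longrightarrow> l \<le> M \<Longrightarrow> q < N l \<Longrightarrow>
    aw k a l q * coupling f l q = (\<Sum>s<N l. adj l q s * (cavg f l q - cavg f l s))"
  using aw_pos[of l q] by (simp add: coupling_def LD_mult)

lemma Bprod_Suc: "1 \<le> l \<Longrightarrow> Bprod N k (Suc l) = mmult (N l) (Bprod N k l) (Bmat k l)"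
  by (cases l) auto

lemma Cprod_Suc: "1 \<le> l \<Longrightarrow> Cprod N k c (Suc l) = mmult (N l) (Cmat k c l) (Cprod N k c l)"
  by (cases l) auto

lemma Bprod_eq:
  "1 \<le> l \<Longrightarrow> l \<le> M \<Longrightarrow> i < N 1 \<Longrightarrow> Bprod N k l i q = (if ancestor 1 (l - 1) i = q then 1 else 0)"
proof (induction l arbitrary: q rule: nat_induct_at_least)
  case base then show ?case by (simp add: idm_def)
next
  case (Suc l)
  let ?u = "ancestor 1 (l - 1) i"
  have u: "?u < N l" using ancestor_less[of 1 "l - 1" i] Suc by simp
  have "Bprod N k (Suc l) i q = Bmat k l ?u q"
    using Suc u by (simp add: Bprod_Suc mmult_def if_distrib[where f="\<lambda>x. x * _"] cong: if_cong)
  also have "\<dots> = (if parent l ?u = q then 1 else 0)"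
    using ingrp_parent[of l ?u] parent_eqI[of l q ?u] u Suc by (auto simp: Bmat_def)
  also have "parent l ?u = ancestor 1 (Suc l - 1) i"
    using ancestor_Suc_parent[of 1 "l - 1" i] Suc by simp
  finally show ?case .
qed

lemma Cprod_mult:
  "1 \<le> l \<Longrightarrow> l \<le> M \<Longrightarrow> r < N l \<Longrightarrow> (\<Sum>j<N 1. Cprod N k c l r j * f j) = cavg f l r"
proof (induction l arbitrary: r rule: nat_induct_at_least)
  case base then show ?case
    by (simp add: idm_def if_distrib[where f="\<lambda>x. x * _"] cong: if_cong)
next
  case (Suc l)
  have "(\<Sum>j<N 1. Cprod N k c (Suc l) r j * f j)
      = (\<Sum>j<N 1. \<Sum>m<N l. Cmat k c l r m * (Cprod N k c l m j * f j))"
    using Suc by (simp add: Cprod_Suc mmult_def sum_distrib_right mult.assoc)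
  also have "\<dots> = (\<Sum>m<N l. Cmat k c l r m * (\<Sum>j<N 1. Cprod N k c l m j * f j))"
    by (subst sum.swap) (simp add: sum_distrib_left)
  also have "\<dots> = (\<Sum>m<N l. Cmat k c l r m * cavg f l m)"
    using Suc by simp
  also have "\<dots> = (\<Sum>m<N l. if m \<in> members l r then c l m * cavg f l m else 0)"
    by (intro sum.cong refl) (simp add: Cmat_def ingrp_def)
  also have "\<dots> = (\<Sum>m\<in>members l r. c l m * cavg f l m)"
    using members_subset[of l r] Suc by (intro sum.mono_neutral_cong_right) auto
  also have "\<dots> = cavg f (Suc l) r" using Suc by (simp add: cavg_Suc)
  finally show ?case .
qed

lemma Llayer_mult:
  assumes "1 \<le> l" "l \<le> M" "i < N 1"
  shows "(\<Sum>j<N 1. Llayer N k adj c a l i j * f j) = coupling f l (ancestor 1 (l - 1) i)"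
proof -
  let ?u = "ancestor 1 (l - 1) i"
  have u: "?u < N l" using ancestor_less[of 1 "l - 1" i] assms by simp
  have B: "(\<Sum>q<N l. Bprod N k l i q * KLD N k adj a l q r) = KLD N k adj a l ?u r" for r
    using u assms by (simp add: Bprod_eq if_distrib[where f="\<lambda>x. x * _"] cong: if_cong)
  have "(\<Sum>j<N 1. Llayer N k adj c a l i j * f j)
      = (\<Sum>r<N l. KLD N k adj a l ?u r * (\<Sum>j<N 1. Cprod N k c l r j * f j))"
    by (simp add: Llayer_def mmult_def B sum_distrib_left sum_distrib_right mult.assoc)
      (rule sum.swap)
  also have "\<dots> = (\<Sum>r<N l. KLD N k adj a l ?u r * cavg f l r)"
    using Cprod_mult assms by simp
  also have "\<dots> = coupling f l ?u"
    by (simp add: coupling_def KLD_def sum_divide_distrib)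
  finally show ?thesis .
qed

lemma Ltot_mult:
  assumes "i < N 1"
  shows "(\<Sum>j<N 1. Ltot M N k adj c a i j * f j) = (\<Sum>l\<in>{1..M}. coupling f l (ancestor 1 (l - 1) i))"
proof -
  have "(\<Sum>j<N 1. Ltot M N k adj c a i j * f j) = (\<Sum>l\<in>{1..M}. \<Sum>j<N 1. Llayer N k adj c a l i j * f j)"
    by (simp add: Ltot_def sum_distrib_right) (rule sum.swap)
  also have "\<dots> = (\<Sum>l\<in>{1..M}. coupling f l (ancestor 1 (l - 1) i))"
    using Llayer_mult assms by (intro sum.cong refl) auto
  finally show ?thesis .
qed

lemma wavg_coupling_above:
  assumes "m < l" "1 \<le> m" "l \<le> Suc M" "q < N l"
  shows "wavg (\<lambda>i. coupling f m (ancestor 1 (m - 1) i)) l q = 0"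
  using Suc_leI[OF assms(1)] assms(2-)
proof (induction l arbitrary: q rule: nat_induct_at_least)
  case base
  let ?g = "\<lambda>i. coupling f m (ancestor 1 (m - 1) i)"
  have "aw k a m r * wavg ?g m r = (\<Sum>s<N m. LD N adj m r s * cavg f m s)"
    if r: "r \<in> members m q" for r
  proof -
    have "r < N m" using r members_subset[of m q] base by auto
    then show ?thesis
      using wavg_ancestor[of m m r "coupling f m"] aw_pos[of m r] base by (simp add: coupling_def)
  qed
  then have "wavg ?g (Suc m) q = (\<Sum>r\<in>members m q. \<Sum>s<N m. LD N adj m r s * cavg f m s) / aw k a (Suc m) q"
    using base by (simp add: wavg_Suc)
  then show ?case using sum_members_LD_mult[of m q] base by simp
next
  case (Suc l)
  then have "wavg (\<lambda>i. coupling f m (ancestor 1 (m - 1) i)) l r = 0" if "r \<in> members l q" for r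
    using that members_subset[of l q] by auto
  then show ?case using Suc by (simp add: wavg_Suc)
qed

lemma wavg_Ltot_mult:
  assumes "1 \<le> l" "l \<le> Suc M" "q < N l"
  shows "wavg (\<lambda>i. \<Sum>j<N 1. Ltot M N k adj c a i j * f j) l q
       = (\<Sum>m\<in>{l..M}. coupling f m (ancestor l (m - l) q))"
proof -
  have "wavg (\<lambda>i. \<Sum>j<N 1. Ltot M N k adj c a i j * f j) l q
      = wavg (\<lambda>i. \<Sum>m\<in>{1..M}. coupling f m (ancestor 1 (m - 1) i)) l q"
    by (rule wavg_cong[OF assms]) (rule Ltot_mult)
  also have "\<dots> = (\<Sum>m\<in>{1..M}. wavg (\<lambda>i. coupling f m (ancestor 1 (m - 1) i)) l q)"
    by (rule wavg_sum)
  also have "\<dots> = (\<Sum>m\<in>{1..M}. if l \<le> m then coupling f m (ancestor l (m - l) q) else 0)"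
  proof (intro sum.cong refl)
    fix m assume m: "m \<in> {1..M}"
    show "wavg (\<lambda>i. coupling f m (ancestor 1 (m - 1) i)) l q
        = (if l \<le> m then coupling f m (ancestor l (m - l) q) else 0)"
      using wavg_ancestor[of l m q "coupling f m"] wavg_coupling_above[of m l q f] assms m
      by (cases "l \<le> m") simp_all
  qed
  also have "\<dots> = (\<Sum>m\<in>{l..M}. coupling f m (ancestor l (m - l) q))"
    using assms by (intro sum.mono_neutral_cong_right) auto
  finally show ?thesis .
qed

lemma wavg_Ltot_mult_deviation:
  assumes "1 \<le> l" "l \<le> M" "q < N l"
  shows "wavg (\<lambda>i. \<Sum>j<N 1. Ltot M N k adj c a i j * f j) l q
       - wavg (\<lambda>i. \<Sum>j<N 1. Ltot M N k adj c a i j * f j) (Suc l) (parent l q) = coupling f l q"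
proof -
  have "{l..M} = insert l {Suc l..M}" using assms by auto
  then have "(\<Sum>m\<in>{l..M}. coupling f m (ancestor l (m - l) q))
      = coupling f l q + (\<Sum>m\<in>{Suc l..M}. coupling f m (ancestor l (m - l) q))"
    by simp
  also have "(\<Sum>m\<in>{Suc l..M}. coupling f m (ancestor l (m - l) q))
      = (\<Sum>m\<in>{Suc l..M}. coupling f m (ancestor (Suc l) (m - Suc l) (parent l q)))"
  proof (intro sum.cong refl)
    fix m assume "m \<in> {Suc l..M}"
    then have "m - l = Suc (m - Suc l)" by auto
    then show "coupling f m (ancestor l (m - l) q) = coupling f m (ancestor (Suc l) (m - Suc l) (parent l q))"
      by simp
  qed
  finally show ?thesis
    using wavg_Ltot_mult[of l q f] wavg_Ltot_mult[of "Suc l" "parent l q" f] parent_less[of l q] assms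
    by simp
qed

definition energy :: "nat \<Rightarrow> (nat \<Rightarrow> real) \<Rightarrow> real" where
  "energy l u = (\<Sum>q<N l. \<Sum>s<N l. adj l q s * (u q - u s)\<^sup>2) / 2"

lemma energy_nonneg: "1 \<le> l \<Longrightarrow> l \<le> M \<Longrightarrow> 0 \<le> energy l u"
  unfolding energy_def by (intro divide_nonneg_pos sum_nonneg mult_nonneg_nonneg) (auto simp: adj_nonneg)

lemma sq_diff_le_energy_if_adj:
  assumes "1 \<le> l" "l \<le> M" "adj l r s = 1"
  shows "(u r - u s)\<^sup>2 \<le> 2 * energy l u"
proof -
  have rs: "r < N l" "s < N l"
    using adj_within_group[of l r s] ingrp_less_N assms by auto
  have "(u r - u s)\<^sup>2 = adj l r s * (u r - u s)\<^sup>2" using assms by simp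
  also have "\<dots> \<le> (\<Sum>s'<N l. adj l r s' * (u r - u s')\<^sup>2)"
    using rs assms adj_nonneg by (intro member_le_sum) auto
  also have "\<dots> \<le> (\<Sum>q<N l. \<Sum>s'<N l. adj l q s' * (u q - u s')\<^sup>2)"
    using rs assms adj_nonneg
    by (intro member_le_sum[where f="\<lambda>q. \<Sum>s'<N l. adj l q s' * (u q - u s')\<^sup>2"])
       (auto intro!: sum_nonneg)
  finally show ?thesis by (simp add: energy_def)
qed

lemma sq_diff_le_energy_if_connected:
  assumes "1 \<le> l" "l \<le> M" "(\<lambda>u v. adj l u v = 1)\<^sup>*\<^sup>* q r"
  shows "\<exists>C\<ge>0. \<forall>u. (u q - u r)\<^sup>2 \<le> C * energy l u"
  using assms(3)
proof (induction rule: rtranclp_induct)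
  case (step y z)
  then obtain C where C: "C \<ge> 0" "\<forall>u. (u q - u y)\<^sup>2 \<le> C * energy l u" by auto
  have "(u q - u z)\<^sup>2 \<le> (2 * C + 4) * energy l u" for u
  proof -
    have "(u q - u z)\<^sup>2 \<le> 2 * (u q - u y)\<^sup>2 + 2 * (u y - u z)\<^sup>2"
      by (rule sq_diff_le_sq_diff_add)
    also have "\<dots> \<le> 2 * (C * energy l u) + 2 * (2 * energy l u)"
      using C(2) sq_diff_le_energy_if_adj[of l y z u] step assms by (intro add_mono) auto
    finally show ?thesis by (simp add: algebra_simps)
  qed
  then show ?case using C by (intro exI[of _ "2 * C + 4"]) auto
qed (auto intro: exI[of _ 0])

lemma sq_diff_le_energy_if_same_parent:
  assumes "1 \<le> l" "l \<le> M"
  obtains C where "0 \<le> C"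
    "\<And>q r u. q < N l \<Longrightarrow> r < N l \<Longrightarrow> parent l q = parent l r \<Longrightarrow> (u q - u r)\<^sup>2 \<le> C * energy l u"
proof -
  let ?S = "{(q, r). q < N l \<and> r < N l \<and> parent l q = parent l r}"
  have "finite ?S" by (rule finite_subset[of _ "{..<N l} \<times> {..<N l}"]) auto
  moreover have "\<exists>C\<ge>0. \<forall>u. (u (fst x) - u (snd x))\<^sup>2 \<le> C * energy l u" if "x \<in> ?S" for x
  proof -
    obtain q r where x: "x = (q, r)" "q < N l" "r < N l" "parent l q = parent l r"
      using \<open>x \<in> ?S\<close> by auto
    then have "(\<lambda>u v. adj l u v = 1)\<^sup>*\<^sup>* q r"
      using group_connected[of l "parent l q" q r] parent_less ingrp_parent assms by metis
    then show ?thesis using sq_diff_le_energy_if_connected assms x by simp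
  qed
  ultimately obtain C where "0 \<le> C" "\<forall>x\<in>?S. \<forall>u. (u (fst x) - u (snd x))\<^sup>2 \<le> C * energy l u"
    using finite_uniform_bound[of ?S "\<lambda>x u. (u (fst x) - u (snd x))\<^sup>2" "energy l"] energy_nonneg assms
    by blast
  then show ?thesis using that by auto
qed

lemma sq_le_if_group_mean_eq_0:
  assumes l: "1 \<le> l" "l \<le> M" and q: "q < N l"
    and mean: "(\<Sum>r\<in>members l (parent l q). aw k a l r * u r) = 0"
    and diff: "\<And>r. r \<in> members l (parent l q) \<Longrightarrow> (u q - u r)\<^sup>2 \<le> D"
  shows "(u q)\<^sup>2 \<le> D"
proof -
  let ?p = "parent l q"
  have p: "?p < N (Suc l)" "members l ?p \<subseteq> {..<N l}"
    using parent_less members_subset q l by auto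
  have "0 \<le> D" using diff[of q] ingrp_parent[OF l q] by (simp add: ingrp_def)
  have "\<bar>u q\<bar> \<le> sqrt D"
  proof (rule abs_le_if_weighted_mean_eq_0[where w = "aw k a l" and G = "members l ?p"])
    show "0 < (\<Sum>r\<in>members l ?p. aw k a l r)"
      using aw_pos[of "Suc l" ?p] aw_Suc p l by simp
    show "0 \<le> aw k a l r" if "r \<in> members l ?p" for r
      using aw_nonneg[of l r] p(2) that l by auto
    show "\<bar>u q - u r\<bar> \<le> sqrt D" if "r \<in> members l ?p" for r
      using diff[OF that] by (simp add: real_le_rsqrt)
  qed (rule mean)
  then have "\<bar>u q\<bar>\<^sup>2 \<le> (sqrt D)\<^sup>2" by (intro power_mono) auto
  then show ?thesis using \<open>0 \<le> D\<close> by simp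
qed

lemma poincare_inequality:
  assumes "1 \<le> l" "l \<le> M"
  obtains C where "0 < C"
    "\<And>u. (\<And>p. p < N (Suc l) \<Longrightarrow> (\<Sum>q\<in>members l p. aw k a l q * u q) = 0) \<Longrightarrow>
       (\<Sum>q<N l. aw k a l q * (u q)\<^sup>2) \<le> C * energy l u"
proof -
  obtain C0 where C0: "0 \<le> C0"
    "\<And>q r u. q < N l \<Longrightarrow> r < N l \<Longrightarrow> parent l q = parent l r \<Longrightarrow> (u q - u r)\<^sup>2 \<le> C0 * energy l u"
    using sq_diff_le_energy_if_same_parent assms by blast
  have aw: "q < N l \<Longrightarrow> 0 \<le> aw k a l q" for q using aw_nonneg assms by simp
  define C where "C = (\<Sum>q<N l. aw k a l q) * C0 + 1"
  have "0 < C"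
    unfolding C_def using C0 aw by (intro add_nonneg_pos mult_nonneg_nonneg sum_nonneg) auto
  moreover have "(\<Sum>q<N l. aw k a l q * (u q)\<^sup>2) \<le> C * energy l u"
    if mean: "\<And>p. p < N (Suc l) \<Longrightarrow> (\<Sum>q\<in>members l p. aw k a l q * u q) = 0" for u
  proof -
    have "(u q)\<^sup>2 \<le> C0 * energy l u" if q: "q < N l" for q
    proof (rule sq_le_if_group_mean_eq_0[OF assms q])
      show "(\<Sum>r\<in>members l (parent l q). aw k a l r * u r) = 0"
        using mean parent_less[OF assms q] .
      show "(u q - u r)\<^sup>2 \<le> C0 * energy l u" if "r \<in> members l (parent l q)" for r
        using C0(2)[OF q, of r u] members_subset[OF assms parent_less[OF assms q]]
          parent_in_members[OF that] that by auto
    qed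
    then have "(\<Sum>q<N l. aw k a l q * (u q)\<^sup>2) \<le> (\<Sum>q<N l. aw k a l q * (C0 * energy l u))"
      using aw by (intro sum_mono mult_left_mono) auto
    also have "\<dots> = (\<Sum>q<N l. aw k a l q) * C0 * energy l u"
      by (simp add: sum_distrib_right mult.assoc)
    also have "\<dots> \<le> C * energy l u"
      unfolding C_def using energy_nonneg assms by (simp add: distrib_right)
    finally show ?thesis .
  qed
  ultimately show ?thesis using that by blast
qed

lemma tendsto_energy_zero:
  assumes "\<And>q. q < N l \<Longrightarrow> ((\<lambda>t. u t q) \<longlongrightarrow> 0) F"
  shows "((\<lambda>t. energy l (u t)) \<longlongrightarrow> 0) F"
proof -
  have "((\<lambda>t. (\<Sum>q<N l. \<Sum>s<N l. adj l q s * (u t q - u t s)\<^sup>2) / 2)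
      \<longlongrightarrow> (\<Sum>q<N l. \<Sum>s<N l. adj l q s * (0 - 0)\<^sup>2) / 2) F"
    using assms by (intro tendsto_intros) auto
  then show ?thesis by (simp add: energy_def)
qed

end

locale hierarchy_solution = hierarchy +
  fixes x :: "real \<Rightarrow> nat \<Rightarrow> real"
  assumes ode: "\<And>t i. 0 \<le> t \<Longrightarrow> i < N 1 \<Longrightarrow>
        ((\<lambda>s. x s i) has_real_derivative - (\<Sum>j<N 1. Ltot M N k adj c a i j * x t j)) (at t within {0..})"
begin

definition deviation :: "nat \<Rightarrow> real \<Rightarrow> nat \<Rightarrow> real" where
  "deviation l t q = wavg (x t) l q - wavg (x t) (Suc l) (parent l q)"

definition mismatch :: "nat \<Rightarrow> real \<Rightarrow> nat \<Rightarrow> real" where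
  "mismatch l t q = cavg (x t) l q - wavg (x t) l q"

definition lyapunov :: "nat \<Rightarrow> real \<Rightarrow> real" where
  "lyapunov l t = (\<Sum>q<N l. aw k a l q * (deviation l t q)\<^sup>2)"

lemma wavg_x_deriv:
  assumes "1 \<le> l" "l \<le> Suc M" "q < N l" "0 \<le> t"
  shows "((\<lambda>s. wavg (x s) l q) has_real_derivative
           - wavg (\<lambda>i. \<Sum>j<N 1. Ltot M N k adj c a i j * x t j) l q) (at t within {0..})"
  using wavg_deriv[OF ode[OF assms(4)] assms(1-3)] by (simp add: wavg_uminus)

lemma deviation_deriv:
  assumes "1 \<le> l" "l \<le> M" "q < N l" "0 \<le> t"
  shows "((\<lambda>s. deviation l s q) has_real_derivative - coupling (x t) l q) (at t within {0..})"
proof -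
  let ?W = "wavg (\<lambda>i. \<Sum>j<N 1. Ltot M N k adj c a i j * x t j)"
  have "((\<lambda>s. deviation l s q) has_real_derivative - ?W l q - - ?W (Suc l) (parent l q))
      (at t within {0..})"
    unfolding deviation_def using assms parent_less[of l q] by (intro DERIV_diff wavg_x_deriv) auto
  moreover have "- ?W l q - - ?W (Suc l) (parent l q) = - coupling (x t) l q"
    using wavg_Ltot_mult_deviation[OF assms(1-3), of "x t"] by simp
  ultimately show ?thesis by simp
qed

lemma lyapunov_deriv:
  assumes "1 \<le> l" "l \<le> M" "0 \<le> t"
  shows "(lyapunov l has_real_derivative
      (\<Sum>q<N l. aw k a l q * (2 * deviation l t q * - coupling (x t) l q))) (at t within {0..})"
proof -
  have "((\<lambda>s. (deviation l s q)\<^sup>2) has_real_derivative 2 * deviation l t q * - coupling (x t) l q)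
      (at t within {0..})" if "q < N l" for q
    using DERIV_power[OF deviation_deriv[OF assms(1,2) that assms(3)], of 2] by (simp add: ac_simps)
  then have "((\<lambda>s. \<Sum>q<N l. aw k a l q * (deviation l s q)\<^sup>2) has_real_derivative
      (\<Sum>q<N l. aw k a l q * (2 * deviation l t q * - coupling (x t) l q))) (at t within {0..})"
    by (intro DERIV_sum DERIV_cmult) auto
  then show ?thesis unfolding lyapunov_def[abs_def] .
qed

(* Adjacent nodes share their parent, so the parent averages hidden in cavg cancel along edges. *)
lemma aw_mult_coupling_deviation:
  assumes "1 \<le> l" "l \<le> M" "q < N l"
  shows "aw k a l q * coupling (x t) l q = (\<Sum>s<N l. adj l q s *
      ((deviation l t q + mismatch l t q) - (deviation l t s + mismatch l t s)))"
proof -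
  have "aw k a l q * coupling (x t) l q = (\<Sum>s<N l. adj l q s * (cavg (x t) l q - cavg (x t) l s))"
    by (rule aw_mult_coupling[OF assms])
  also have "\<dots> = (\<Sum>s<N l. adj l q s *
      ((deviation l t q + mismatch l t q) - (deviation l t s + mismatch l t s)))"
  proof (intro sum.cong refl)
    fix s
    show "adj l q s * (cavg (x t) l q - cavg (x t) l s)
        = adj l q s * ((deviation l t q + mismatch l t q) - (deviation l t s + mismatch l t s))"
      using same_parent_if_adj[OF assms(1,2), of q s]
      by (cases "adj l q s = 0") (simp_all add: deviation_def mismatch_def)
  qed
  finally show ?thesis .
qed

lemma lyapunov_deriv_le:
  assumes l: "1 \<le> l" "l \<le> M"
  shows "(\<Sum>q<N l. aw k a l q * (2 * deviation l t q * - coupling (x t) l q))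
       \<le> energy l (mismatch l t) - energy l (deviation l t)"
proof -
  let ?d = "deviation l t" and ?e = "mismatch l t" and ?A = "{..<N l}"
  let ?v = "\<lambda>r. ?d r + ?e r"
  have "aw k a l q * (2 * ?d q * - coupling (x t) l q) = - 2 * (\<Sum>s\<in>?A. adj l q s * ?d q * (?v q - ?v s))"
    if q: "q < N l" for q
  proof -
    have "aw k a l q * (2 * ?d q * - coupling (x t) l q) = - 2 * ?d q * (aw k a l q * coupling (x t) l q)"
      by (simp add: algebra_simps)
    also have "\<dots> = - 2 * (\<Sum>s\<in>?A. adj l q s * ?d q * (?v q - ?v s))"
      unfolding aw_mult_coupling_deviation[OF l q] by (simp add: sum_distrib_left ac_simps)
    finally show ?thesis .
  qed
  then have "(\<Sum>q<N l. aw k a l q * (2 * ?d q * - coupling (x t) l q))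
      = - 2 * (\<Sum>q\<in>?A. \<Sum>s\<in>?A. adj l q s * ?d q * (?v q - ?v s))"
    by (simp add: sum_distrib_left)
  also have "\<dots> = - (\<Sum>q\<in>?A. \<Sum>s\<in>?A. adj l q s * (?d q - ?d s) * (?v q - ?v s))"
    using sum_sym_mult_diff[of ?A "adj l" ?d ?v] adj_sym l by simp
  also have "\<dots> \<le> (\<Sum>q\<in>?A. \<Sum>s\<in>?A. adj l q s * (((?e q - ?e s)\<^sup>2 - (?d q - ?d s)\<^sup>2) / 2))"
    unfolding sum_negf[symmetric] by (intro sum_mono minus_mult_diff_le adj_nonneg[OF l])
  also have "\<dots> = energy l ?e - energy l ?d"
    by (simp add: energy_def sum_subtractf sum_distrib_left right_diff_distrib diff_divide_distrib
        sum_divide_distrib)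
  finally show ?thesis .
qed

lemma deviation_weighted_mean:
  assumes "1 \<le> l" "l \<le> M" "p < N (Suc l)"
  shows "(\<Sum>q\<in>members l p. aw k a l q * deviation l t q) = 0"
proof -
  have "(\<Sum>q\<in>members l p. aw k a l q * deviation l t q)
      = (\<Sum>q\<in>members l p. aw k a l q * wavg (x t) l q) - aw k a (Suc l) p * wavg (x t) (Suc l) p"
    using parent_in_members aw_Suc[of l p] assms
    by (simp add: deviation_def right_diff_distrib sum_subtractf sum_distrib_right)
  also have "\<dots> = 0"
    using aw_pos[of "Suc l" p] assms by (simp add: wavg_Suc)
  finally show ?thesis .
qed

lemma lyapunov_tendsto_zero:
  assumes l: "1 \<le> l" "l \<le> M"
    and mismatch: "\<And>q. q < N l \<Longrightarrow> ((\<lambda>t. mismatch l t q) \<longlongrightarrow> 0) at_top"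
  shows "(lyapunov l \<longlongrightarrow> 0) at_top"
proof -
  obtain C where C: "0 < C"
    "\<And>u. (\<And>p. p < N (Suc l) \<Longrightarrow> (\<Sum>q\<in>members l p. aw k a l q * u q) = 0) \<Longrightarrow>
       (\<Sum>q<N l. aw k a l q * (u q)\<^sup>2) \<le> C * energy l u"
    using poincare_inequality[OF l] by blast
  show ?thesis
  proof (rule tendsto_zero_if_differential_inequality)
    fix t :: real assume t: "0 \<le> t"
    show "(lyapunov l has_real_derivative
        (\<Sum>q<N l. aw k a l q * (2 * deviation l t q * - coupling (x t) l q))) (at t within {0..})"
      using lyapunov_deriv l t by blast
    have "lyapunov l t \<le> C * energy l (deviation l t)"
      unfolding lyapunov_def using C(2) deviation_weighted_mean[OF l] by blast
    then have "- energy l (deviation l t) \<le> - (1 / C) * lyapunov l t"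
      using C(1) by (simp add: field_simps)
    then show "(\<Sum>q<N l. aw k a l q * (2 * deviation l t q * - coupling (x t) l q))
        \<le> - (1 / C) * lyapunov l t + energy l (mismatch l t)"
      using lyapunov_deriv_le[OF l, of t] by simp
    show "0 \<le> lyapunov l t"
      unfolding lyapunov_def using aw_nonneg l by (intro sum_nonneg mult_nonneg_nonneg) auto
  qed (use C(1) tendsto_energy_zero[OF mismatch] in auto)
qed

lemma deviation_tendsto_zero:
  assumes l: "1 \<le> l" "l \<le> M" and q: "q < N l"
    and mismatch: "\<And>q. q < N l \<Longrightarrow> ((\<lambda>t. mismatch l t q) \<longlongrightarrow> 0) at_top"
  shows "((\<lambda>t. deviation l t q) \<longlongrightarrow> 0) at_top"
proof (rule tendsto_zero_if_sq_le)
  have aw: "0 < aw k a l q" using aw_pos l q by simp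
  show "(deviation l t q)\<^sup>2 \<le> lyapunov l t / aw k a l q" for t
  proof -
    have "aw k a l q * (deviation l t q)\<^sup>2 \<le> lyapunov l t"
      unfolding lyapunov_def using q aw_nonneg[of l] l
      by (intro member_le_sum[where f="\<lambda>q. aw k a l q * (deviation l t q)\<^sup>2"]) auto
    then show ?thesis using aw by (simp add: field_simps)
  qed
  show "((\<lambda>t. lyapunov l t / aw k a l q) \<longlongrightarrow> 0) at_top"
    using tendsto_divide[OF lyapunov_tendsto_zero[OF l mismatch] tendsto_const, of "aw k a l q"] aw by simp
qed

lemma mismatch_Suc:
  assumes "1 \<le> l" "l \<le> M - 1" "p < N (Suc l)"
  shows "mismatch (Suc l) t p = (\<Sum>r\<in>members l p. c l r * (mismatch l t r + deviation l t r))"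
proof -
  have "cavg (x t) (Suc l) p = (\<Sum>r\<in>members l p.
      c l r * (mismatch l t r + deviation l t r) + c l r * wavg (x t) (Suc l) p)"
    unfolding cavg_Suc[OF assms(1)] using parent_in_members
    by (intro sum.cong refl) (simp add: mismatch_def deviation_def algebra_simps)
  also have "\<dots> = (\<Sum>r\<in>members l p. c l r * (mismatch l t r + deviation l t r)) + wavg (x t) (Suc l) p"
    using sum_c[OF assms] by (simp add: sum.distrib sum_distrib_right[symmetric])
  finally show ?thesis by (simp add: mismatch_def)
qed

lemma deviation_mismatch_tendsto_zero:
  assumes "1 \<le> l" "l \<le> M" "q < N l"
  shows "((\<lambda>t. mismatch l t q) \<longlongrightarrow> 0) at_top \<and> ((\<lambda>t. deviation l t q) \<longlongrightarrow> 0) at_top"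
  using assms
proof (induction l arbitrary: q rule: nat_induct_at_least)
  case base
  have "mismatch 1 t r = 0" for t r by (simp add: mismatch_def)
  then show ?case using deviation_tendsto_zero[of 1] base by simp
next
  case (Suc l)
  have "((\<lambda>t. mismatch (Suc l) t p) \<longlongrightarrow> 0) at_top" if p: "p < N (Suc l)" for p
  proof -
    have "((\<lambda>t. \<Sum>r\<in>members l p. c l r * (mismatch l t r + deviation l t r))
        \<longlongrightarrow> (\<Sum>r\<in>members l p. c l r * (0 + 0))) at_top"
      using Suc members_subset[of l p] p by (intro tendsto_intros) auto
    then show ?thesis using mismatch_Suc[of l p] Suc p by simp
  qed
  then show ?case using deviation_tendsto_zero[of "Suc l"] Suc by auto
qed

lemma x_minus_wavg_tendsto_zero:
  assumes "n \<le> M" "i < N 1"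
  shows "((\<lambda>t. x t i - wavg (x t) (Suc n) (ancestor 1 n i)) \<longlongrightarrow> 0) at_top"
  using assms(1)
proof (induction n)
  case (Suc n)
  have u: "ancestor 1 n i < N (Suc n)" using ancestor_less[of 1 n i] Suc assms by simp
  have telescope: "x t i - wavg (x t) (Suc (Suc n)) (ancestor 1 (Suc n) i)
      = (x t i - wavg (x t) (Suc n) (ancestor 1 n i)) + deviation (Suc n) t (ancestor 1 n i)" for t
    using ancestor_Suc_parent[of 1 n i] by (simp add: deviation_def)
  have "((\<lambda>t. deviation (Suc n) t (ancestor 1 n i)) \<longlongrightarrow> 0) at_top"
    using deviation_mismatch_tendsto_zero[of "Suc n"] Suc u by auto
  then have "((\<lambda>t. (x t i - wavg (x t) (Suc n) (ancestor 1 n i)) + deviation (Suc n) t (ancestor 1 n i))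
      \<longlongrightarrow> 0 + 0) at_top"
    using Suc by (intro tendsto_add) auto
  then show ?case unfolding telescope by simp
qed simp

lemma wavg_top_const:
  assumes "0 \<le> t"
  shows "wavg (x t) (Suc M) 0 = wavg (x 0) (Suc M) 0"
proof -
  have "\<exists>C. \<forall>s\<in>{0..}. wavg (x s) (Suc M) 0 = C"
  proof (rule has_field_derivative_zero_constant)
    fix s :: real assume s: "s \<in> {0..}"
    have "wavg (\<lambda>i. \<Sum>j<N 1. Ltot M N k adj c a i j * x s j) (Suc M) 0 = 0"
      using wavg_Ltot_mult[of "Suc M" 0 "x s"] N_top by simp
    then show "((\<lambda>s. wavg (x s) (Suc M) 0) has_real_derivative 0) (at s within {0..})"
      using wavg_x_deriv[of "Suc M" 0 s] s N_top by simp
  qed (rule convex_real_interval)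
  then show ?thesis using assms by force
qed

lemma tendsto_weighted_mean:
  assumes init: "\<And>i. i < N 1 \<Longrightarrow> x 0 i = x0 i" and i: "i < N 1"
  shows "((\<lambda>t. x t i) \<longlongrightarrow> (\<Sum>j<N 1. a j * x0 j) / (\<Sum>j<N 1. a j)) at_top"
proof -
  define m where "m = wavg x0 (Suc M) 0"
  have "ancestor 1 M i = 0" using ancestor_less[of 1 M i] i N_top by simp
  then have "((\<lambda>t. x t i - wavg (x t) (Suc M) 0) \<longlongrightarrow> 0) at_top"
    using x_minus_wavg_tendsto_zero[of M i] i by simp
  then have "((\<lambda>t. (x t i - wavg (x t) (Suc M) 0) + m) \<longlongrightarrow> 0 + m) at_top"
    by (rule tendsto_add[OF _ tendsto_const])
  moreover have "wavg (x t) (Suc M) 0 = m" if "0 \<le> t" for t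
    using wavg_top_const[OF that] wavg_cong[of "Suc M" 0 "x 0" x0] init N_top by (simp add: m_def)
  then have "\<forall>\<^sub>F t in at_top. (x t i - wavg (x t) (Suc M) 0) + m = x t i"
    unfolding eventually_at_top_linorder by (intro exI[of _ 0]) simp
  ultimately have "((\<lambda>t. x t i) \<longlongrightarrow> m) at_top"
    using tendsto_cong by fastforce
  have "aw k a (Suc M) 0 * m = (\<Sum>j<N 1. a j * x0 j)"
    using wavg_weighted_sum[of "Suc M" x0] N_top by (simp add: m_def)
  moreover have "aw k a (Suc M) 0 = (\<Sum>j<N 1. a j)"
    using wavg_weighted_sum[of "Suc M" "\<lambda>_. 1"] wavg_ancestor[of "Suc M" "Suc M" 0 "\<lambda>_. 1"] N_top
    by simp
  moreover have "0 < aw k a (Suc M) 0" using aw_pos[of "Suc M" 0] N_top by simp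
  ultimately have "m = (\<Sum>j<N 1. a j * x0 j) / (\<Sum>j<N 1. a j)"
    by (simp add: field_simps)
  with \<open>((\<lambda>t. x t i) \<longlongrightarrow> m) at_top\<close> show ?thesis by simp
qed

end

theorem theorem3:
  fixes M :: nat and N :: "nat \<Rightarrow> nat" and k :: "nat \<Rightarrow> nat \<Rightarrow> nat"
    and adj :: "nat \<Rightarrow> nat \<Rightarrow> nat \<Rightarrow> real" and c :: "nat \<Rightarrow> nat \<Rightarrow> real" and a :: "nat \<Rightarrow> real"
    and x :: "real \<Rightarrow> nat \<Rightarrow> real" and x0 :: "nat \<Rightarrow> real"
  assumes hs: "hier_system M N k adj c a"
    and ode: "\<And>t i. 0 \<le> t \<Longrightarrow> i < N 1 \<Longrightarrow>
        ((\<lambda>s. x s i) has_real_derivative - (\<Sum>j<N 1. Ltot M N k adj c a i j * x t j)) (at t within {0..})"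
    and init: "\<And>i. i < N 1 \<Longrightarrow> x 0 i = x0 i"
  shows "(\<forall>i<N 1. ((\<lambda>t. x t i) \<longlongrightarrow> (\<Sum>j<N 1. a j * x0 j) / (\<Sum>j<N 1. a j)) at_top)
       \<and> ((\<forall>i<N 1. \<forall>j<N 1. a i = a j) \<longrightarrow>
           (\<forall>i<N 1. ((\<lambda>t. x t i) \<longlongrightarrow> (\<Sum>j<N 1. x0 j) / real (N 1)) at_top))"
proof -
  interpret hierarchy_solution M N k adj c a x
    by (unfold_locales; rule hs ode; assumption)
  have lim: "\<forall>i<N 1. ((\<lambda>t. x t i) \<longlongrightarrow> (\<Sum>j<N 1. a j * x0 j) / (\<Sum>j<N 1. a j)) at_top"
    using tendsto_weighted_mean[OF init] by blast
  show ?thesis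
  proof (intro conjI impI)
    assume equal: "\<forall>i<N 1. \<forall>j<N 1. a i = a j"
    have "(\<Sum>j<N 1. a j * x0 j) / (\<Sum>j<N 1. a j) = (\<Sum>j<N 1. x0 j) / card {..<N 1}"
    proof (rule weighted_mean_const_weights)
      show "a i = a j" if "i \<in> {..<N 1}" "j \<in> {..<N 1}" for i j
        using equal that by blast
      show "a i \<noteq> 0" if "i \<in> {..<N 1}" for i
        using a_pos[of i] that by simp
    qed
    with lim show "\<forall>i<N 1. ((\<lambda>t. x t i) \<longlongrightarrow> (\<Sum>j<N 1. x0 j) / real (N 1)) at_top"
      by simp
  qed (rule lim)
qed

end
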